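(* For a random partition $p$ the following are equivalent: (i) $p$ generates the potential for TU games, i.e., $\sum_{\pi\in\Pi(N)}p_N(\pi)\sum_{B\in\pi}v(B)=\mathrm{Pot}(v)$ for all $N\subseteq\mathbf{U}$ and all TU games $v$ on $N$; (ii) $\sum_{\pi\in\Pi(N):T\in\pi}p_N(\pi)=\frac{(n-t)!(t-1)!}{n!}$ for all $N\subseteq\mathbf{U}$ and nonempty $T\subseteq N$; (iii) for all $N\subseteq\mathbf{U}$, $i\in N$, and nonempty $S\subseteq N\setminus\{i\}$, $$\sum_{\pi\in\Pi((N\setminus\{i\})\setminus S)}p_{N\setminus\{i\}}(\{S\}\cup\pi)=\frac{n}{n-s}\sum_{\pi\in\Pi((N\setminus\{i\})\setminus S)}\sum_{B\in\pi\cup\{\emptyset\}}p_N(\{S\}\cup\pi_{+i\leadsto B}).$$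
   Context: $\mathbf{U}$ is a finite set of players; cardinalities of $N,S,T,B$ are $n,s,t,b$. $\Pi(N)$ is the set of partitions of $N$ ($\Pi(\emptyset)=\{\emptyset\}$). A random partition is a family $p=(p_N)_{N\subseteq\mathbf{U}}$ with $p_N$ a probability distribution on $\Pi(N)$. For $\pi\in\Pi(M)$, $i\notin M$, $B\in\pi$: $\pi_{+i\leadsto B}=(\pi\setminus\{B\})\cup\{B\cup\{i\}\}$ and $\pi_{+i\leadsto\emptyset}=\pi\cup\{\{i\}\}$. A TU game on $N$ is $v:2^N\to\mathbb{R}$ with $v(\emptyset)=0$; $v_{-i}$ denotes its restriction to subsets of $N\setminus\{i\}$. $\mathrm{Pot}$ is the potential for TU games: the unique map with value $0$ on the game with empty player set and $\sum_{i\in N}[\mathrm{Pot}(v)-\mathrm{Pot}(v_{-i})]=v(N)$; explicitly $\mathrm{Pot}(v)=\sum_{\emptyset\ne S\subseteq N}\frac{(s-1)!(n-s)!}{n!}v(S)$. *)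

theory Defs
  imports Complex_Main "HOL-Library.Disjoint_Sets"
begin

text \<open>Partitions of N: Pi(N) = {pi. partition_on N pi}; note partition_on {} {} holds.\<close>
definition Partitions :: "'a set \<Rightarrow> 'a set set set" where
  "Partitions N = {\<pi>. partition_on N \<pi>}"

definition random_partition :: "'a set \<Rightarrow> ('a set \<Rightarrow> 'a set set \<Rightarrow> real) \<Rightarrow> bool" where
  "random_partition U p \<longleftrightarrow>
     (\<forall>N. N \<subseteq> U \<longrightarrow> (\<forall>\<pi>\<in>Partitions N. p N \<pi> \<ge> 0) \<and> (\<Sum>\<pi>\<in>Partitions N. p N \<pi>) = 1)"

text \<open>A TU game on N: a function on subsets with v {} = 0 (values outside 2^N are irrelevant).\<close>
definition Pot :: "'a set \<Rightarrow> ('a set \<Rightarrow> real) \<Rightarrow> real" where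
  "Pot N v = (\<Sum>S\<in>{S. S \<subseteq> N \<and> S \<noteq> {}}.
      fact (card S - 1) * fact (card N - card S) / fact (card N) * v S)"

text \<open>pi_{+i ~> B}: add player i to block B, or as a singleton if B = {}.\<close>
definition join_block :: "'a set set \<Rightarrow> 'a \<Rightarrow> 'a set \<Rightarrow> 'a set set" where
  "join_block \<pi> i B = (if B = {} then insert {i} \<pi> else insert (insert i B) (\<pi> - {B}))"

definition generates_potential :: "'a set \<Rightarrow> ('a set \<Rightarrow> 'a set set \<Rightarrow> real) \<Rightarrow> bool" where
  "generates_potential U p \<longleftrightarrow>
     (\<forall>N v. N \<subseteq> U \<longrightarrow> v {} = 0 \<longrightarrow>
        (\<Sum>\<pi>\<in>Partitions N. p N \<pi> * (\<Sum>B\<in>\<pi>. v B)) = Pot N v)"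

definition block_prob_condition :: "'a set \<Rightarrow> ('a set \<Rightarrow> 'a set set \<Rightarrow> real) \<Rightarrow> bool" where
  "block_prob_condition U p \<longleftrightarrow>
     (\<forall>N T. N \<subseteq> U \<longrightarrow> T \<subseteq> N \<longrightarrow> T \<noteq> {} \<longrightarrow>
        (\<Sum>\<pi>\<in>{\<pi>\<in>Partitions N. T \<in> \<pi>}. p N \<pi>)
          = fact (card N - card T) * fact (card T - 1) / fact (card N))"

definition consistency_condition :: "'a set \<Rightarrow> ('a set \<Rightarrow> 'a set set \<Rightarrow> real) \<Rightarrow> bool" where
  "consistency_condition U p \<longleftrightarrow>
     (\<forall>N i S. N \<subseteq> U \<longrightarrow> i \<in> N \<longrightarrow> S \<subseteq> N - {i} \<longrightarrow> S \<noteq> {} \<longrightarrow>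
        (\<Sum>\<pi>\<in>Partitions ((N - {i}) - S). p (N - {i}) (insert S \<pi>))
          = real (card N) / real (card N - card S) *
            (\<Sum>\<pi>\<in>Partitions ((N - {i}) - S).
               \<Sum>B\<in>insert {} \<pi>. p N (insert S (join_block \<pi> i B))))"

end

theory Submission
  imports Defs
begin

text \<open>
  Everything reduces to the block probabilities q_N(T), the probability that T is a block of the
  random partition of N. Exchanging the sums over partitions and blocks gives
  E[sum of v over the blocks] = sum over T of v(T) q_N(T), so (i) holds iff q_N(T) equals the
  coefficient (n-t)!(t-1)!/n! of v(T) in Pot, which is (ii). Removing the block S, and inserting
  i into a block or as a singleton, are bijections between partitions, so the two sides of (iii)
  are q_{N-i}(S) and n/(n-s) q_N(S); since the potential weights satisfy this recursion, (ii)
  implies (iii). Conversely (iii) determines q_N(T) for proper T from the smaller set N-i, and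
  q_N(N) is then forced because the expected block sizes sum to n: sum over T of t q_N(T) = n,
  an identity the potential weights satisfy as well.
\<close>

section \<open>Partitions\<close>

lemma finite_Partitions: "finite N \<Longrightarrow> finite (Partitions N)"
  unfolding Partitions_def by (rule finitely_many_partition_on)

lemma Partitions_subset_nonempty_subsets:
  "\<pi> \<in> Partitions N \<Longrightarrow> \<pi> \<subseteq> {T. T \<subseteq> N \<and> T \<noteq> {}}"
  unfolding Partitions_def partition_on_def by auto

lemma partition_on_Diff_block:
  assumes "partition_on M \<tau>" "C \<in> \<tau>"
  shows "partition_on (M - C) (\<tau> - {C})"
proof -
  have "disjnt C (\<Union>(\<tau> - {C}))"
    using assms unfolding partition_on_def disjnt_def pairwise_def by auto
  moreover have "insert C (\<tau> - {C}) = \<tau>"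
    using assms(2) by auto
  ultimately show ?thesis
    using partition_on_insert assms(1) by metis
qed

lemma bij_betw_insert_block:
  assumes "S \<subseteq> M" "S \<noteq> {}"
  shows "bij_betw (insert S) (Partitions (M - S)) {\<sigma> \<in> Partitions M. S \<in> \<sigma>}"
proof (rule bij_betw_byWitness[where f' = "\<lambda>\<sigma>. \<sigma> - {S}"])
  show "\<forall>\<pi>\<in>Partitions (M - S). insert S \<pi> - {S} = \<pi>"
    using Partitions_subset_nonempty_subsets assms by blast
  show "\<forall>\<sigma>\<in>{\<sigma> \<in> Partitions M. S \<in> \<sigma>}. insert S (\<sigma> - {S}) = \<sigma>"
    by auto
  show "insert S ` Partitions (M - S) \<subseteq> {\<sigma> \<in> Partitions M. S \<in> \<sigma>}"
  proof (rule image_subsetI)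
    fix \<pi> assume "\<pi> \<in> Partitions (M - S)"
    then have "partition_on (M - S) \<pi>" "disjnt S (\<Union>\<pi>)"
      by (auto simp: Partitions_def partition_on_def disjnt_def)
    then show "insert S \<pi> \<in> {\<sigma> \<in> Partitions M. S \<in> \<sigma>}"
      using assms by (simp add: Partitions_def partition_on_insert)
  qed
  show "(\<lambda>\<sigma>. \<sigma> - {S}) ` {\<sigma> \<in> Partitions M. S \<in> \<sigma>} \<subseteq> Partitions (M - S)"
    by (auto simp: Partitions_def intro: partition_on_Diff_block)
qed

lemma sum_Partitions_insert_block:
  assumes "S \<subseteq> M" "S \<noteq> {}"
  shows "(\<Sum>\<pi>\<in>Partitions (M - S). f (insert S \<pi>)) = (\<Sum>\<sigma>\<in>{\<sigma> \<in> Partitions M. S \<in> \<sigma>}. f \<sigma>)"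
  by (rule sum.reindex_bij_betw[OF bij_betw_insert_block[OF assms]])

lemma join_block_eq:
  "{} \<notin> \<pi> \<Longrightarrow> join_block \<pi> i B = insert (insert i B) (\<pi> - {B})"
  by (simp add: join_block_def)

lemma join_block_in_Partitions:
  assumes \<pi>: "\<pi> \<in> Partitions (M - {i})" and B: "B \<in> insert {} \<pi>" and i: "i \<in> M"
  shows "join_block \<pi> i B \<in> Partitions M"
proof -
  have P: "partition_on (M - {i}) \<pi>"
    using \<pi> by (simp add: Partitions_def)
  have rest: "partition_on (M - {i} - B) (\<pi> - {B})"
    using B P partition_onD3[OF P] partition_on_Diff_block[OF P] by auto
  have "disjnt (insert i B) (\<Union>(\<pi> - {B}))" "insert i B \<subseteq> M"
    using partition_onD1[OF rest] B partition_onD1[OF P] i by (auto simp: disjnt_def)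
  moreover have "M - insert i B = M - {i} - B"
    by auto
  ultimately show ?thesis
    using rest partition_on_insert join_block_eq[OF partition_onD3[OF P]]
    by (metis Partitions_def insert_not_empty mem_Collect_eq)
qed

lemma join_block_inject:
  assumes \<pi>: "\<pi> \<in> Partitions (M - {i})" "B \<in> insert {} \<pi>"
    and \<pi>': "\<pi>' \<in> Partitions (M - {i})" "B' \<in> insert {} \<pi>'"
    and eq: "join_block \<pi> i B = join_block \<pi>' i B'"
  shows "\<pi> = \<pi>' \<and> B = B'"
proof -
  have i_free: "\<forall>X\<in>\<pi>. i \<notin> X" "\<forall>X\<in>\<pi>'. i \<notin> X"
    and nonempty: "{} \<notin> \<pi>" "{} \<notin> \<pi>'"
    using Partitions_subset_nonempty_subsets[OF \<pi>(1)] Partitions_subset_nonempty_subsets[OF \<pi>'(1)]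
    by blast+
  have eq': "insert (insert i B) (\<pi> - {B}) = insert (insert i B') (\<pi>' - {B'})"
    using eq by (simp add: join_block_eq nonempty)
  \<comment> \<open>The new block is the only one containing i, so it determines B.\<close>
  have "insert i B \<in> insert (insert i B') (\<pi>' - {B'})"
    using eq' by blast
  then have "insert i B = insert i B'"
    using i_free(2) by blast
  moreover have "i \<notin> B" "i \<notin> B'"
    using \<pi>(2) \<pi>'(2) i_free by auto
  ultimately have BB: "B = B'"
    by (metis insert_ident)
  have "insert i B \<notin> \<pi> - {B}" "insert i B \<notin> \<pi>' - {B}"
    using i_free by blast+
  then have rest: "\<pi> - {B} = \<pi>' - {B}"
    using eq' unfolding BB by (metis Diff_insert_absorb)
  have "B \<in> \<pi> \<longleftrightarrow> B \<in> \<pi>'"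
    using \<pi>(2) \<pi>'(2) nonempty BB by auto
  then have "\<pi> = \<pi>'"
    using rest by (metis insert_Diff Diff_empty Diff_insert0)
  then show ?thesis
    using BB by simp
qed

lemma join_block_surj:
  assumes \<tau>: "\<tau> \<in> Partitions M" and i: "i \<in> M"
  obtains \<pi> B where "\<pi> \<in> Partitions (M - {i})" "B \<in> insert {} \<pi>" "\<tau> = join_block \<pi> i B"
proof -
  have P: "partition_on M \<tau>"
    using \<tau> by (simp add: Partitions_def)
  obtain C where C: "C \<in> \<tau>" "i \<in> C"
    using partition_onD1[OF P] i by blast
  have rest: "partition_on (M - C) (\<tau> - {C})"
    by (rule partition_on_Diff_block[OF P C(1)])
  define B where "B = C - {i}"
  have C_eq: "C = insert i B"
    using C(2) B_def by auto
  show ?thesis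
  proof (cases "B = {}")
    case True
    then have "\<tau> - {C} \<in> Partitions (M - {i})" "\<tau> = join_block (\<tau> - {C}) i {}"
      using rest C(1) C_eq by (auto simp: Partitions_def join_block_def)
    then show ?thesis
      using that by blast
  next
    case False
    have "\<Union>(\<tau> - {C}) = M - C" "C \<subseteq> M" "{} \<notin> \<tau>"
      using partition_onD1[OF rest] partition_onD1[OF P] partition_onD3[OF P] C(1) by auto
    then have "disjnt B (\<Union>(\<tau> - {C}))" "B \<subseteq> M - {i}" "M - {i} - B = M - C"
      using C(2) unfolding B_def by (auto simp: disjnt_def)
    then have "insert B (\<tau> - {C}) \<in> Partitions (M - {i})"
      using rest False by (simp add: Partitions_def partition_on_insert)
    moreover have "B \<notin> \<tau> - {C}"
      using \<open>disjnt B (\<Union>(\<tau> - {C}))\<close> False by (auto simp: disjnt_def)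
    then have "\<tau> = join_block (insert B (\<tau> - {C})) i B"
      using C(1) C_eq False \<open>{} \<notin> \<tau>\<close> by (auto simp: join_block_def)
    ultimately show ?thesis
      using that by blast
  qed
qed

lemma bij_betw_join_block:
  assumes "i \<in> M"
  shows "bij_betw (\<lambda>(\<pi>, B). join_block \<pi> i B)
           (SIGMA \<pi>:Partitions (M - {i}). insert {} \<pi>) (Partitions M)"
  unfolding bij_betw_def
proof (intro conjI subset_antisym)
  show "inj_on (\<lambda>(\<pi>, B). join_block \<pi> i B) (SIGMA \<pi>:Partitions (M - {i}). insert {} \<pi>)"
    by (rule inj_onI) (auto dest: join_block_inject)
  show "(\<lambda>(\<pi>, B). join_block \<pi> i B) ` (SIGMA \<pi>:Partitions (M - {i}). insert {} \<pi>) \<subseteq> Partitions M"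
    using join_block_in_Partitions[OF _ _ assms] by auto
  show "Partitions M \<subseteq> (\<lambda>(\<pi>, B). join_block \<pi> i B) ` (SIGMA \<pi>:Partitions (M - {i}). insert {} \<pi>)"
  proof
    fix \<tau> assume "\<tau> \<in> Partitions M"
    then obtain \<pi> B where "\<pi> \<in> Partitions (M - {i})" "B \<in> insert {} \<pi>" "\<tau> = join_block \<pi> i B"
      using join_block_surj assms by metis
    then show "\<tau> \<in> (\<lambda>(\<pi>, B). join_block \<pi> i B) ` (SIGMA \<pi>:Partitions (M - {i}). insert {} \<pi>)"
      by force
  qed
qed

lemma sum_Partitions_join_block:
  assumes "finite M" "i \<in> M"
  shows "(\<Sum>\<pi>\<in>Partitions (M - {i}). \<Sum>B\<in>insert {} \<pi>. g (join_block \<pi> i B))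
       = (\<Sum>\<tau>\<in>Partitions M. g \<tau>)"
proof -
  have "finite \<pi>" if "\<pi> \<in> Partitions (M - {i})" for \<pi>
    using that assms(1) finite_elements by (auto simp: Partitions_def)
  then have "(\<Sum>\<pi>\<in>Partitions (M - {i}). \<Sum>B\<in>insert {} \<pi>. g (join_block \<pi> i B))
      = (\<Sum>(\<pi>, B)\<in>(SIGMA \<pi>:Partitions (M - {i}). insert {} \<pi>). g (join_block \<pi> i B))"
    using assms(1) by (intro sum.Sigma) (auto simp: finite_Partitions)
  also have "\<dots> = (\<Sum>\<tau>\<in>Partitions M. g \<tau>)"
    using sum.reindex_bij_betw[OF bij_betw_join_block[OF assms(2)], of g]
    by (simp add: case_prod_unfold)
  finally show ?thesis .
qed

lemma sum_card_blocks:
  assumes "finite N" "\<pi> \<in> Partitions N"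
  shows "(\<Sum>B\<in>\<pi>. real (card B)) = real (card N)"
proof -
  have "card N = (\<Sum>B\<in>\<pi>. card B)"
    using assms Partitions_subset_nonempty_subsets[OF assms(2)]
    by (intro product_partition) (auto simp: Partitions_def intro: finite_subset)
  then show ?thesis
    by simp
qed

section \<open>Block probabilities and the potential weights\<close>

definition block_prob :: "('a set \<Rightarrow> 'a set set \<Rightarrow> real) \<Rightarrow> 'a set \<Rightarrow> 'a set \<Rightarrow> real" where
  "block_prob p N T = (\<Sum>\<pi>\<in>{\<pi> \<in> Partitions N. T \<in> \<pi>}. p N \<pi>)"

definition pot_weight :: "nat \<Rightarrow> nat \<Rightarrow> real" where
  "pot_weight n t = fact (n - t) * fact (t - 1) / fact n"

lemma sum_Partitions_sum_blocks:
  assumes "finite N"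
  shows "(\<Sum>\<pi>\<in>Partitions N. p N \<pi> * (\<Sum>B\<in>\<pi>. v B))
       = (\<Sum>T | T \<subseteq> N \<and> T \<noteq> {}. v T * block_prob p N T)"
proof -
  let ?Ts = "{T. T \<subseteq> N \<and> T \<noteq> {}}"
  have "(\<Sum>\<pi>\<in>Partitions N. p N \<pi> * (\<Sum>B\<in>\<pi>. v B))
      = (\<Sum>\<pi>\<in>Partitions N. \<Sum>T\<in>{T \<in> ?Ts. T \<in> \<pi>}. p N \<pi> * v T)"
  proof (rule sum.cong[OF refl])
    fix \<pi> assume "\<pi> \<in> Partitions N"
    then have "{T \<in> ?Ts. T \<in> \<pi>} = \<pi>"
      using Partitions_subset_nonempty_subsets by blast
    then show "p N \<pi> * (\<Sum>B\<in>\<pi>. v B) = (\<Sum>T\<in>{T \<in> ?Ts. T \<in> \<pi>}. p N \<pi> * v T)"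
      by (simp add: sum_distrib_left)
  qed
  also have "\<dots> = (\<Sum>T\<in>?Ts. \<Sum>\<pi>\<in>{\<pi> \<in> Partitions N. T \<in> \<pi>}. p N \<pi> * v T)"
    using assms by (intro sum.swap_restrict) (auto simp: finite_Partitions)
  also have "\<dots> = (\<Sum>T\<in>?Ts. v T * block_prob p N T)"
    by (simp add: block_prob_def sum_distrib_left mult.commute)
  finally show ?thesis .
qed

lemma sum_card_block_prob:
  assumes "finite N" and "(\<Sum>\<pi>\<in>Partitions N. p N \<pi>) = 1"
  shows "(\<Sum>T | T \<subseteq> N \<and> T \<noteq> {}. real (card T) * block_prob p N T) = real (card N)"
proof -
  have "(\<Sum>T | T \<subseteq> N \<and> T \<noteq> {}. real (card T) * block_prob p N T)
      = (\<Sum>\<pi>\<in>Partitions N. p N \<pi> * (\<Sum>B\<in>\<pi>. real (card B)))"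
    by (rule sum_Partitions_sum_blocks[OF assms(1), symmetric])
  also have "\<dots> = (\<Sum>\<pi>\<in>Partitions N. p N \<pi>) * real (card N)"
    by (simp add: sum_card_blocks[OF assms(1)] sum_distrib_right)
  finally show ?thesis
    using assms(2) by simp
qed

lemma binomial_mult_pot_weight:
  assumes "1 \<le> k" "k \<le> n"
  shows "real (n choose k) * real k * pot_weight n k = 1"
proof -
  have "(fact k :: real) = real k * fact (k - 1)"
    using assms(1) fact_reduce[of k] by simp
  then have "(fact n :: real) = real k * fact (k - 1) * fact (n - k) * real (n choose k)"
    using binomial_fact_lemma[OF assms(2)] by (metis of_nat_fact of_nat_mult)
  then show ?thesis
    using assms by (simp add: pot_weight_def field_simps)
qed

lemma sum_card_pot_weight:
  assumes "finite N"
  shows "(\<Sum>T | T \<subseteq> N \<and> T \<noteq> {}. real (card T) * pot_weight (card N) (card T)) = real (card N)"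
proof -
  let ?Ts = "{T. T \<subseteq> N \<and> T \<noteq> {}}"
  let ?h = "\<lambda>T. real (card T) * pot_weight (card N) (card T)"
  have "card T \<in> {1..card N}" if "T \<in> ?Ts" for T
    using that assms finite_subset[of T N] by (auto simp: Suc_le_eq card_gt_0_iff card_mono)
  then have "card ` ?Ts \<subseteq> {1..card N}"
    by blast
  then have "(\<Sum>T\<in>?Ts. ?h T) = (\<Sum>k\<in>{1..card N}. \<Sum>T\<in>{T \<in> ?Ts. card T = k}. ?h T)"
    using assms by (intro sum.group[symmetric]) simp_all
  also have "\<dots> = (\<Sum>k\<in>{1..card N}. 1)"
  proof (rule sum.cong[OF refl])
    fix k assume k: "k \<in> {1..card N}"
    then have "{T \<in> ?Ts. card T = k} = {T. T \<subseteq> N \<and> card T = k}"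
      by auto
    then have "(\<Sum>T\<in>{T \<in> ?Ts. card T = k}. ?h T)
        = (\<Sum>T\<in>{T. T \<subseteq> N \<and> card T = k}. real k * pot_weight (card N) k)"
      by (auto intro: sum.cong)
    also have "\<dots> = real (card N choose k) * real k * pot_weight (card N) k"
      using n_subsets[OF assms, of k] by simp
    also have "\<dots> = 1"
      using k by (intro binomial_mult_pot_weight) auto
    finally show "(\<Sum>T\<in>{T \<in> ?Ts. card T = k}. ?h T) = 1" .
  qed
  finally show ?thesis
    by simp
qed

lemma pot_weight_Suc:
  assumes "t \<le> n"
  shows "pot_weight n t = real (Suc n) / real (Suc n - t) * pot_weight (Suc n) t"
proof -
  \<comment> \<open>Naming n - t keeps simp from splitting the truncated subtraction in real (Suc n - t).\<close>
  obtain d where "n - t = d" "Suc n - t = Suc d"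
    using assms by (simp add: Suc_diff_le)
  then show ?thesis
    by (simp add: pot_weight_def field_simps del: of_nat_Suc)
qed

lemma Pot_eq_sum_pot_weight:
  "Pot N v = (\<Sum>T | T \<subseteq> N \<and> T \<noteq> {}. v T * pot_weight (card N) (card T))"
  unfolding Pot_def pot_weight_def by (simp add: mult_ac)

section \<open>The three conditions\<close>

lemma block_prob_condition_iff:
  "block_prob_condition U p \<longleftrightarrow>
     (\<forall>N T. N \<subseteq> U \<longrightarrow> T \<subseteq> N \<longrightarrow> T \<noteq> {} \<longrightarrow> block_prob p N T = pot_weight (card N) (card T))"
  unfolding block_prob_condition_def block_prob_def pot_weight_def ..

lemma block_prob_insert_block:
  assumes "S \<subseteq> M" "S \<noteq> {}"
  shows "(\<Sum>\<pi>\<in>Partitions (M - S). p M (insert S \<pi>)) = block_prob p M S"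
  unfolding block_prob_def by (rule sum_Partitions_insert_block[OF assms])

lemma block_prob_join_block:
  assumes "finite N" "i \<in> N" "S \<subseteq> N - {i}" "S \<noteq> {}"
  shows "(\<Sum>\<pi>\<in>Partitions (N - {i} - S). \<Sum>B\<in>insert {} \<pi>. p N (insert S (join_block \<pi> i B)))
       = block_prob p N S"
proof -
  have "N - {i} - S = (N - S) - {i}"
    by auto
  then have "(\<Sum>\<pi>\<in>Partitions (N - {i} - S). \<Sum>B\<in>insert {} \<pi>. p N (insert S (join_block \<pi> i B)))
      = (\<Sum>\<tau>\<in>Partitions (N - S). p N (insert S \<tau>))"
    using assms sum_Partitions_join_block[of "N - S" i "\<lambda>\<tau>. p N (insert S \<tau>)"] by auto
  also have "\<dots> = block_prob p N S"
    using assms by (intro block_prob_insert_block) auto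
  finally show ?thesis .
qed

lemma consistency_condition_iff:
  assumes "finite U"
  shows "consistency_condition U p \<longleftrightarrow>
    (\<forall>N i S. N \<subseteq> U \<longrightarrow> i \<in> N \<longrightarrow> S \<subseteq> N - {i} \<longrightarrow> S \<noteq> {} \<longrightarrow>
       block_prob p (N - {i}) S = real (card N) / real (card N - card S) * block_prob p N S)"
proof -
  have "finite N" if "N \<subseteq> U" for N
    using that assms finite_subset by blast
  then show ?thesis
    unfolding consistency_condition_def
    by (auto simp: block_prob_insert_block block_prob_join_block)
qed

lemma generates_potential_iff_block_prob_condition:
  assumes "finite U"
  shows "generates_potential U p \<longleftrightarrow> block_prob_condition U p"
proof -
  have expectation: "(\<Sum>\<pi>\<in>Partitions N. p N \<pi> * (\<Sum>B\<in>\<pi>. v B)) - Pot N v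
      = (\<Sum>T | T \<subseteq> N \<and> T \<noteq> {}. v T * (block_prob p N T - pot_weight (card N) (card T)))"
    if "N \<subseteq> U" for N v
    using that assms finite_subset[of N U]
    by (simp add: sum_Partitions_sum_blocks Pot_eq_sum_pot_weight sum_subtractf right_diff_distrib)
  show ?thesis
  proof
    assume gen: "generates_potential U p"
    show "block_prob_condition U p"
      unfolding block_prob_condition_iff
    proof (intro allI impI)
      fix N T assume N: "N \<subseteq> U" and T: "T \<subseteq> N" "T \<noteq> {}"
      let ?v = "\<lambda>X. if X = T then 1 else 0 :: real"
      have "0 = (\<Sum>T' | T' \<subseteq> N \<and> T' \<noteq> {}. ?v T' * (block_prob p N T' - pot_weight (card N) (card T')))"
        using gen N T(2) expectation[OF N, of ?v] unfolding generates_potential_def by simp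
      also have "\<dots> = (\<Sum>T' | T' \<subseteq> N \<and> T' \<noteq> {}.
          if T' = T then block_prob p N T' - pot_weight (card N) (card T') else 0)"
        by (rule sum.cong) auto
      also have "\<dots> = block_prob p N T - pot_weight (card N) (card T)"
        using N T assms finite_subset[of N U] by (simp add: sum.delta)
      finally show "block_prob p N T = pot_weight (card N) (card T)"
        by simp
    qed
  next
    assume "block_prob_condition U p"
    then show "generates_potential U p"
      unfolding generates_potential_def block_prob_condition_iff
      using expectation by (simp add: eq_iff_diff_eq_0[symmetric])
  qed
qed

lemma consistency_condition_if_block_prob_condition:
  assumes "finite U" and block: "block_prob_condition U p"
  shows "consistency_condition U p"
  unfolding consistency_condition_iff[OF assms(1)]
proof (intro allI impI)
  fix N i S assume N: "N \<subseteq> U" and i: "i \<in> N" and S: "S \<subseteq> N - {i}" "S \<noteq> {}"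
  have "finite N"
    using N assms(1) finite_subset by blast
  then have card_N: "card N = Suc (card (N - {i}))"
    using i by (rule card.remove)
  have "card S \<le> card (N - {i})"
    using \<open>finite N\<close> S(1) by (intro card_mono) auto
  have block_prob_eq: "block_prob p M T = pot_weight (card M) (card T)"
    if "M \<subseteq> U" "T \<subseteq> M" "T \<noteq> {}" for M T
    using block[unfolded block_prob_condition_iff, rule_format, OF that] .
  have "block_prob p (N - {i}) S = pot_weight (card (N - {i})) (card S)"
    using N S by (intro block_prob_eq) auto
  also have "\<dots> = real (card N) / real (card N - card S) * pot_weight (card N) (card S)"
    unfolding card_N by (rule pot_weight_Suc) fact
  also have "\<dots> = real (card N) / real (card N - card S) * block_prob p N S"
    using block_prob_eq[OF N _ S(2)] S(1) by (metis Diff_subset subset_trans)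
  finally show "block_prob p (N - {i}) S = real (card N) / real (card N - card S) * block_prob p N S" .
qed

lemma block_prob_whole_set:
  assumes "finite N" "N \<noteq> {}" and "(\<Sum>\<pi>\<in>Partitions N. p N \<pi>) = 1"
    and proper: "\<And>T. T \<subset> N \<Longrightarrow> T \<noteq> {} \<Longrightarrow> block_prob p N T = pot_weight (card N) (card T)"
  shows "block_prob p N N = pot_weight (card N) (card N)"
proof -
  let ?Ts = "{T. T \<subseteq> N \<and> T \<noteq> {}}"
  have "(\<Sum>T\<in>?Ts. real (card T) * block_prob p N T)
      = (\<Sum>T\<in>?Ts. real (card T) * pot_weight (card N) (card T))"
    using sum_card_block_prob[of N p, OF assms(1,3)] sum_card_pot_weight[OF assms(1)] by simp
  moreover have "(\<Sum>T\<in>?Ts - {N}. real (card T) * block_prob p N T)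
      = (\<Sum>T\<in>?Ts - {N}. real (card T) * pot_weight (card N) (card T))"
    using proper by (intro sum.cong) auto
  moreover have "N \<in> ?Ts" "finite ?Ts"
    using assms(1,2) by auto
  ultimately have "real (card N) * block_prob p N N = real (card N) * pot_weight (card N) (card N)"
    by (simp add: sum.remove[of ?Ts N])
  moreover have "card N \<noteq> 0"
    using assms(1,2) by simp
  ultimately show ?thesis
    by simp
qed

lemma block_prob_condition_if_consistency_condition:
  assumes "finite U" and "random_partition U p" and "consistency_condition U p"
  shows "block_prob_condition U p"
  unfolding block_prob_condition_iff
proof (intro allI impI)
  have cons: "block_prob p (N - {i}) S = real (card N) / real (card N - card S) * block_prob p N S"
    if "N \<subseteq> U" "i \<in> N" "S \<subseteq> N - {i}" "S \<noteq> {}" for N i S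
    using assms(3)[unfolded consistency_condition_iff[OF assms(1)], rule_format, OF that] .
  fix N T assume N: "N \<subseteq> U" and T: "T \<subseteq> N" "T \<noteq> {}"
  have "finite N"
    using N assms(1) finite_subset by blast
  from this N T show "block_prob p N T = pot_weight (card N) (card T)"
  proof (induction N arbitrary: T rule: finite_psubset_induct)
    case (psubset N)
    have proper: "block_prob p N T' = pot_weight (card N) (card T')" if "T' \<subset> N" "T' \<noteq> {}" for T'
    proof -
      obtain i where i: "i \<in> N" "i \<notin> T'"
        using \<open>T' \<subset> N\<close> by blast
      have T': "T' \<subseteq> N - {i}"
        using i \<open>T' \<subset> N\<close> by blast
      have card_N: "card N = Suc (card (N - {i}))"
        using psubset.hyps i(1) by (rule card.remove)
      have "card T' \<le> card (N - {i})"
        using psubset.hyps T' by (intro card_mono) auto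
      have "real (card N) / real (card N - card T') * block_prob p N T' = block_prob p (N - {i}) T'"
        using cons[OF psubset.prems(1) i(1) T' \<open>T' \<noteq> {}\<close>] by simp
      also have "\<dots> = pot_weight (card (N - {i})) (card T')"
        by (rule psubset.IH) (use i psubset.prems(1) T' \<open>T' \<noteq> {}\<close> in auto)
      also have "\<dots> = real (card N) / real (card N - card T') * pot_weight (card N) (card T')"
        unfolding card_N by (rule pot_weight_Suc) fact
      finally show ?thesis
        using \<open>card T' \<le> card (N - {i})\<close> card_N by simp
    qed
    show ?case
    proof (cases "T = N")
      case False
      then show ?thesis
        using proper psubset.prems by blast
    next
      case True
      have "(\<Sum>\<pi>\<in>Partitions N. p N \<pi>) = 1"
        using assms(2) psubset.prems(1) unfolding random_partition_def by blast
      then show ?thesis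
        using block_prob_whole_set psubset.hyps proper True psubset.prems(3) by blast
    qed
  qed
qed

theorem proposition1:
  fixes U :: "'a set" and p :: "'a set \<Rightarrow> 'a set set \<Rightarrow> real"
  assumes "finite U" and "random_partition U p"
  shows "(generates_potential U p \<longleftrightarrow> block_prob_condition U p) \<and>
         (block_prob_condition U p \<longleftrightarrow> consistency_condition U p)"
proof
  show "generates_potential U p \<longleftrightarrow> block_prob_condition U p"
    by (rule generates_potential_iff_block_prob_condition[OF assms(1)])
  show "block_prob_condition U p \<longleftrightarrow> consistency_condition U p"
    using consistency_condition_if_block_prob_condition[OF assms(1)]
      block_prob_condition_if_consistency_condition[OF assms]
    by (rule iffI)
qed

end
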